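(* Assume $\Lambda(\mathbf{f}_i,P)$ is a nonnegative integer for every $i$ and every $P\in\mathcal{U}$, and let $M=N\max_{i,P\in\mathcal{U}}\Lambda(\mathbf{f}_i,P)$. Let $\kappa^*\in\arg\max_{1\le\kappa\le M}\kappa/N_\kappa$. Then $\frac{\kappa^*}{N_{\kappa^*}}\ge\min_{P\in\mathcal{U}}\Lambda(w^*_N,P)\ge\frac{N_0}{N_0+1}\min_{P\in\mathcal{U}}\Lambda(w^*,P)$.
   Context: Setting: a simple directed acyclic graph $G=(V,E)$ with capacities $C\in\mathbb{R}_{\ge0}^E$, $s,t$ joined by a directed path, budget $0<\gamma\le\min_eC(e)$, and an uncertainty set $\mathcal{U}$ of finitely many sets $P$ of user paths (directed paths $p_1,\dots,p_k$ with initial values $\lambda_i\ge0$, $\sum_{i:e\in p_i}\lambda_i\le C(e)$). For an $s$-$t$ flow $\mathbf{f}$ ($0\le\mathbf{f}\le C$, conservation at $v\ne s,t$), $T(\mathbf{f},P)$ is the optimal value of: maximize $\sum_i\tilde\lambda_i$ s.t. $\sum_{i:e\in p_i}\tilde\lambda_i\le C(e)-\mathbf{f}(e)$, $0\le\tilde\lambda_i\le\lambda_i$; $\Lambda(\mathbf{f},P)=\sum_i\lambda_i-T(\mathbf{f},P)$; for a strategy (probability distribution) $w$, $\Lambda(w,P)=\sum_{\mathbf{f}}w(\mathbf{f})\Lambda(\mathbf{f},P)$. Let $\mathbf{f}_1,\dots,\mathbf{f}_L$ enumerate the single-path flows of value $\gamma$ (for each directed $s$-$t$ path, the flow equal to $\gamma$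 on its edges and $0$ elsewhere). Fix a positive integer $N_0$; an $N_0$-bounded strategy is a probability distribution on $\{\mathbf{f}_1,\dots,\mathbf{f}_L\}$ with at most $N_0$ nonzero probabilities, and $w^*$ is one maximizing $\min_{P\in\mathcal{U}}\Lambda(w,P)$ among them. Let $N=N_0^2+N_0$, $\mathcal{W}_N$ the set of probability distributions on $\{\mathbf{f}_1,\dots,\mathbf{f}_L\}$ all of whose probabilities lie in $\{\beta/N:\beta\in\{0,\dots,N\}\}$, and $w^*_N$ one maximizing $\min_{P\in\mathcal{U}}\Lambda(w,P)$ over $\mathcal{W}_N$. For a positive integer $\kappa$, $ILP(\kappa)$ is: minimize $\sum_ix_i$ subject to $\sum_ix_i\Lambda(\mathbf{f}_i,P)\ge\kappa$ for all $P\in\mathcal{U}$, $x_i\in\mathbb{N}$; $N_\kappa$ is its optimal value. *)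

theory Defs
  imports "HOL-Analysis.Analysis"
begin

type_synonym 'v edge = "'v \<times> 'v"
type_synonym 'v flow = "'v edge \<Rightarrow> real"
(* a set P of user paths: the list of users, user i has path fst (P!i) and initial value snd (P!i) *)
type_synonym 'v pathset = "('v list \<times> real) list"

definition path_edges :: "'v list \<Rightarrow> 'v edge set" where
  "path_edges p = set (zip p (tl p))"

definition is_dpath :: "'v edge set \<Rightarrow> 'v list \<Rightarrow> bool" where
  "is_dpath E p \<longleftrightarrow> length p \<ge> 2 \<and> distinct p \<and> (\<forall>i < length p - 1. (p ! i, p ! (i + 1)) \<in> E)"

definition st_paths :: "'v edge set \<Rightarrow> 'v \<Rightarrow> 'v \<Rightarrow> 'v list set" where
  "st_paths E s t = {p. is_dpath E p \<and> hd p = s \<and> last p = t}"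

definition path_flow :: "real \<Rightarrow> 'v list \<Rightarrow> 'v flow" where
  "path_flow \<gamma> p = (\<lambda>e. if e \<in> path_edges p then \<gamma> else 0)"

definition single_path_flows :: "'v edge set \<Rightarrow> 'v \<Rightarrow> 'v \<Rightarrow> real \<Rightarrow> 'v flow set" where
  "single_path_flows E s t \<gamma> = path_flow \<gamma> ` st_paths E s t"

definition valid_pathset :: "'v edge set \<Rightarrow> 'v flow \<Rightarrow> 'v pathset \<Rightarrow> bool" where
  "valid_pathset E C P \<longleftrightarrow>
     (\<forall>i < length P. is_dpath E (fst (P ! i)) \<and> snd (P ! i) \<ge> 0) \<and>
     (\<forall>e \<in> E. (\<Sum>i \<in> {i. i < length P \<and> e \<in> path_edges (fst (P ! i))}. snd (P ! i)) \<le> C e)"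

definition T_feasible :: "'v edge set \<Rightarrow> 'v flow \<Rightarrow> 'v flow \<Rightarrow> 'v pathset \<Rightarrow> (nat \<Rightarrow> real) \<Rightarrow> bool" where
  "T_feasible E C f P lt \<longleftrightarrow>
     (\<forall>e \<in> E. (\<Sum>i \<in> {i. i < length P \<and> e \<in> path_edges (fst (P ! i))}. lt i) \<le> C e - f e) \<and>
     (\<forall>i < length P. 0 \<le> lt i \<and> lt i \<le> snd (P ! i))"

definition T_val :: "'v edge set \<Rightarrow> 'v flow \<Rightarrow> 'v flow \<Rightarrow> 'v pathset \<Rightarrow> real" where
  "T_val E C f P = Sup {(\<Sum>i < length P. lt i) | lt. T_feasible E C f P lt}"

definition Loss :: "'v edge set \<Rightarrow> 'v flow \<Rightarrow> 'v flow \<Rightarrow> 'v pathset \<Rightarrow> real" where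
  "Loss E C f P = (\<Sum>i < length P. snd (P ! i)) - T_val E C f P"

definition is_strategy :: "'v flow set \<Rightarrow> ('v flow \<Rightarrow> real) \<Rightarrow> bool" where
  "is_strategy F w \<longleftrightarrow> (\<forall>f. f \<notin> F \<longrightarrow> w f = 0) \<and> (\<forall>f \<in> F. 0 \<le> w f) \<and> sum w F = 1"

definition strat_Loss :: "'v edge set \<Rightarrow> 'v flow \<Rightarrow> 'v flow set \<Rightarrow> ('v flow \<Rightarrow> real) \<Rightarrow> 'v pathset \<Rightarrow> real" where
  "strat_Loss E C F w P = (\<Sum>f \<in> F. w f * Loss E C f P)"

definition robust_Loss :: "'v edge set \<Rightarrow> 'v flow \<Rightarrow> 'v flow set \<Rightarrow> 'v pathset set \<Rightarrow> ('v flow \<Rightarrow> real) \<Rightarrow> real" where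
  "robust_Loss E C F U w = Min ((\<lambda>P. strat_Loss E C F w P) ` U)"

definition bounded_strategy :: "nat \<Rightarrow> 'v flow set \<Rightarrow> ('v flow \<Rightarrow> real) \<Rightarrow> bool" where
  "bounded_strategy N0 F w \<longleftrightarrow> is_strategy F w \<and> card {f \<in> F. w f \<noteq> 0} \<le> N0"

definition grid_strategy :: "nat \<Rightarrow> 'v flow set \<Rightarrow> ('v flow \<Rightarrow> real) \<Rightarrow> bool" where
  "grid_strategy N F w \<longleftrightarrow> is_strategy F w \<and> (\<forall>f \<in> F. \<exists>\<beta>::nat. \<beta> \<le> N \<and> w f = real \<beta> / real N)"

definition ILP_feasible :: "'v edge set \<Rightarrow> 'v flow \<Rightarrow> 'v flow set \<Rightarrow> 'v pathset set \<Rightarrow> nat \<Rightarrow> ('v flow \<Rightarrow> nat) \<Rightarrow> bool" where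
  "ILP_feasible E C F U \<kappa> x \<longleftrightarrow> (\<forall>P \<in> U. (\<Sum>f \<in> F. real (x f) * Loss E C f P) \<ge> real \<kappa>)"

definition N_kappa :: "'v edge set \<Rightarrow> 'v flow \<Rightarrow> 'v flow set \<Rightarrow> 'v pathset set \<Rightarrow> nat \<Rightarrow> nat" where
  "N_kappa E C F U \<kappa> = (LEAST n. \<exists>x. ILP_feasible E C F U \<kappa> x \<and> (\<Sum>f \<in> F. x f) = n)"

(* kappa / N_kappa, with the convention kappa / N_kappa = 0 (i.e. N_kappa = infinity)
   when ILP(kappa) is infeasible *)
definition ILP_ratio :: "'v edge set \<Rightarrow> 'v flow \<Rightarrow> 'v flow set \<Rightarrow> 'v pathset set \<Rightarrow> nat \<Rightarrow> real" where
  "ILP_ratio E C F U \<kappa> =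
     (if \<exists>x. ILP_feasible E C F U \<kappa> x then real \<kappa> / real (N_kappa E C F U \<kappa>) else 0)"

end

theory Submission
  imports Defs
begin

text \<open>
  Both inequalities compare strategies through their integer numerators.
  For the first, the numerators \<open>\<beta>\<close> of \<open>w\<^sub>N = \<beta>/N\<close> form a feasible point of
  \<open>ILP(\<kappa>)\<close> for \<open>\<kappa> = N \<Lambda>(w\<^sub>N)\<close>, which is an integer because the losses are;
  hence \<open>N\<^sub>\<kappa> \<le> N\<close> and \<open>\<Lambda>(w\<^sub>N) = \<kappa>/N \<le> \<kappa>/N\<^sub>\<kappa>\<close>, while \<open>\<kappa> \<le> M\<close> since
  \<open>\<Lambda>(w\<^sub>N)\<close> is at most the largest single loss.
  For the second, rounding \<open>N\<^sub>0\<^sup>2 w\<^sup>*(f)\<close> up adds less than one on each of the at most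
  \<open>N\<^sub>0\<close> support points, so the rounded numerators sum to at most \<open>N\<^sub>0\<^sup>2 + N\<^sub>0 = N\<close>;
  padding them to sum exactly \<open>N\<close> gives a grid strategy dominating
  \<open>N\<^sub>0\<^sup>2/N \<cdot> w\<^sup>* = N\<^sub>0/(N\<^sub>0+1) \<cdot> w\<^sup>*\<close> pointwise, and \<open>\<Lambda>\<close> is monotone and homogeneous
  in the strategy.
\<close>

lemma set_dpath_subset_Field:
  assumes "is_dpath E p"
  shows "set p \<subseteq> Field E"
proof
  fix v assume "v \<in> set p"
  then obtain j where j: "j < length p" "v = p ! j" by (auto simp: in_set_conv_nth)
  have len: "length p \<ge> 2" and edges: "\<forall>i < length p - 1. (p ! i, p ! (i + 1)) \<in> E"
    using assms by (auto simp: is_dpath_def)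
  show "v \<in> Field E"
  proof (cases "j < length p - 1")
    case True
    then show ?thesis using edges j by (blast intro: FieldI1)
  next
    case False
    then have "j - 1 < length p - 1" "j - 1 + 1 = j" using j len by auto
    then show ?thesis using edges j by (metis FieldI2)
  qed
qed

lemma finite_st_paths:
  assumes "finite (Field E)"
  shows "finite (st_paths E s t)"
proof (rule finite_subset)
  show "st_paths E s t \<subseteq> {p. set p \<subseteq> Field E \<and> distinct p}"
    using set_dpath_subset_Field by (auto simp: st_paths_def is_dpath_def)
  show "finite {p. set p \<subseteq> Field E \<and> distinct p}"
    using finite_subset_distinct[OF assms] .
qed

lemma robust_Loss_le:
  assumes "finite U" "P \<in> U"
  shows "robust_Loss E C F U w \<le> strat_Loss E C F w P"
  using assms by (simp add: robust_Loss_def)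

lemma robust_Loss_attained:
  assumes "finite U" "U \<noteq> {}"
  obtains P where "P \<in> U" "robust_Loss E C F U w = strat_Loss E C F w P"
proof -
  have "robust_Loss E C F U w \<in> (\<lambda>P. strat_Loss E C F w P) ` U"
    unfolding robust_Loss_def using assms by (intro Min_in) auto
  then show ?thesis using that by blast
qed

lemma robust_Loss_scaled_le:
  assumes "finite U" "U \<noteq> {}" "0 \<le> c"
    and dom: "\<forall>f \<in> F. c * w' f \<le> w f"
    and Loss_nonneg: "\<forall>f \<in> F. \<forall>P \<in> U. 0 \<le> Loss E C f P"
  shows "c * robust_Loss E C F U w' \<le> robust_Loss E C F U w"
proof -
  obtain P where P: "P \<in> U" and attained: "robust_Loss E C F U w = strat_Loss E C F w P"
    using robust_Loss_attained[OF assms(1,2)] .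
  have "c * robust_Loss E C F U w' \<le> c * strat_Loss E C F w' P"
    using robust_Loss_le[OF assms(1) P] \<open>0 \<le> c\<close> by (rule mult_left_mono)
  also have "\<dots> = (\<Sum>f\<in>F. (c * w' f) * Loss E C f P)"
    unfolding strat_Loss_def sum_distrib_left by (simp add: mult.assoc)
  also have "\<dots> \<le> (\<Sum>f\<in>F. w f * Loss E C f P)"
    using dom Loss_nonneg P by (intro sum_mono mult_right_mono) auto
  finally show ?thesis unfolding attained strat_Loss_def .
qed

lemma robust_Loss_le_Max_Loss:
  assumes "finite F" "finite U" "U \<noteq> {}" "is_strategy F w"
  shows "robust_Loss E C F U w \<le> Max ((\<lambda>(f, P). Loss E C f P) ` (F \<times> U))"
    (is "_ \<le> ?max")
proof -
  obtain P where P: "P \<in> U" using \<open>U \<noteq> {}\<close> by blast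
  have Loss_le: "Loss E C f P \<le> ?max" if "f \<in> F" for f
    using that P assms(1,2) by (intro Max_ge) force+
  have "robust_Loss E C F U w \<le> (\<Sum>f\<in>F. w f * Loss E C f P)"
    using robust_Loss_le[OF assms(2) P] by (simp add: strat_Loss_def)
  also have "\<dots> \<le> (\<Sum>f\<in>F. w f * ?max)"
    using assms(4) Loss_le by (intro sum_mono mult_left_mono) (auto simp: is_strategy_def)
  also have "\<dots> = ?max"
    using assms(4) by (simp add: is_strategy_def sum_distrib_right[symmetric])
  finally show ?thesis .
qed

lemma ILP_feasible_sum_pos:
  assumes feas: "ILP_feasible E C F U \<kappa> x" and "0 < \<kappa>" "U \<noteq> {}"
  shows "0 < (\<Sum>f\<in>F. x f)"
proof (rule ccontr)
  assume "\<not> ?thesis"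
  then have "\<forall>f \<in> F. x f = 0" if "finite F" using that by simp
  then have "(\<Sum>f\<in>F. real (x f) * Loss E C f P) = 0" for P
    by (cases "finite F") simp_all
  moreover obtain P where "P \<in> U" using \<open>U \<noteq> {}\<close> by blast
  ultimately show False
    using feas \<open>0 < \<kappa>\<close> unfolding ILP_feasible_def by fastforce
qed

lemma N_kappa_le:
  assumes "ILP_feasible E C F U \<kappa> x"
  shows "N_kappa E C F U \<kappa> \<le> (\<Sum>f\<in>F. x f)"
  unfolding N_kappa_def using assms by (intro Least_le) blast

lemma N_kappa_pos:
  assumes "ILP_feasible E C F U \<kappa> x" "0 < \<kappa>" "U \<noteq> {}"
  shows "0 < N_kappa E C F U \<kappa>"
proof -
  have "\<exists>x'. ILP_feasible E C F U \<kappa> x' \<and> (\<Sum>f\<in>F. x' f) = N_kappa E C F U \<kappa>"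
    unfolding N_kappa_def by (rule LeastI_ex) (use assms(1) in blast)
  then show ?thesis using ILP_feasible_sum_pos assms(2,3) by metis
qed

lemma ILP_ratio_nonneg: "0 \<le> ILP_ratio E C F U \<kappa>"
  by (simp add: ILP_ratio_def)

lemma ILP_ratio_ge:
  assumes "ILP_feasible E C F U \<kappa> x" "0 < \<kappa>" "U \<noteq> {}"
  shows "real \<kappa> / real (\<Sum>f\<in>F. x f) \<le> ILP_ratio E C F U \<kappa>"
proof -
  have "real \<kappa> / real (\<Sum>f\<in>F. x f) \<le> real \<kappa> / real (N_kappa E C F U \<kappa>)"
    using N_kappa_le[OF assms(1)] N_kappa_pos[OF assms] by (intro frac_le) (auto simp flip: of_nat_sum)
  then show ?thesis using assms(1) by (auto simp: ILP_ratio_def)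
qed

lemma grid_strategy_numerators:
  assumes "grid_strategy N F w" "0 < N"
  obtains \<beta> :: "_ \<Rightarrow> nat"
  where "\<forall>f \<in> F. w f = real (\<beta> f) / real N" "(\<Sum>f\<in>F. \<beta> f) = N"
proof -
  obtain \<beta> :: "_ \<Rightarrow> nat" where \<beta>: "\<forall>f \<in> F. w f = real (\<beta> f) / real N"
    using assms(1) unfolding grid_strategy_def by metis
  have "real (\<Sum>f\<in>F. \<beta> f) = real N * sum w F"
    unfolding of_nat_sum sum_distrib_left using \<beta> \<open>0 < N\<close> by (intro sum.cong) auto
  also have "\<dots> = real N"
    using assms(1) by (simp add: grid_strategy_def is_strategy_def)
  finally show ?thesis using that \<beta> of_nat_eq_iff by blast
qed

lemma grid_strategy_of_numerators:
  assumes "finite F" "0 < N" "(\<Sum>f\<in>F. \<beta> f) = N"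
  shows "grid_strategy N F (\<lambda>f. if f \<in> F then real (\<beta> f) / real N else 0)"
  unfolding grid_strategy_def is_strategy_def
proof (intro conjI ballI allI impI)
  show "(\<Sum>f\<in>F. if f \<in> F then real (\<beta> f) / real N else 0) = 1"
    using assms(2,3) by (simp add: sum_divide_distrib[symmetric] of_nat_sum[symmetric])
  fix f assume "f \<in> F"
  then have "\<beta> f \<le> N" using assms(1,3) by (metis member_le_sum zero_le)
  then show "\<exists>b::nat. b \<le> N \<and>
      (if f \<in> F then real (\<beta> f) / real N else 0) = real b / real N"
    using \<open>f \<in> F\<close> by auto
qed auto

lemma sum_nat_ceiling_le:
  fixes g :: "'a \<Rightarrow> real"
  assumes "finite A" "\<forall>x \<in> A. 0 \<le> g x"
  shows "real (\<Sum>x\<in>A. nat \<lceil>g x\<rceil>) \<le> sum g A + card {x \<in> A. g x \<noteq> 0}"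
proof -
  have "real (nat \<lceil>g x\<rceil>) \<le> g x + (if g x \<noteq> 0 then 1 else 0)" if "0 \<le> g x" for x
    using that of_int_ceiling_le_add_one[of "g x"] by auto
  then have "real (\<Sum>x\<in>A. nat \<lceil>g x\<rceil>) \<le> (\<Sum>x\<in>A. g x + (if g x \<noteq> 0 then 1 else 0))"
    unfolding of_nat_sum using assms(2) by (intro sum_mono) auto
  also have "\<dots> = sum g A + card {x \<in> A. g x \<noteq> 0}"
    using assms(1) by (simp add: sum.distrib sum.inter_filter[symmetric])
  finally show ?thesis .
qed

lemma exists_dominating_sum_eq:
  fixes b :: "'a \<Rightarrow> nat"
  assumes "finite A" "a \<in> A" "(\<Sum>x\<in>A. b x) \<le> n"
  obtains \<beta> where "\<forall>x. b x \<le> \<beta> x" "(\<Sum>x\<in>A. \<beta> x) = n"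
proof
  let ?\<beta> = "\<lambda>x. b x + (if x = a then n - (\<Sum>x\<in>A. b x) else 0)"
  show "\<forall>x. b x \<le> ?\<beta> x" by simp
  show "(\<Sum>x\<in>A. ?\<beta> x) = n"
    using assms by (simp add: sum.distrib)
qed

lemma grid_strategy_dominating:
  assumes "finite F" "F \<noteq> {}" "0 < N" "bounded_strategy N0 F w'" "m + N0 \<le> N"
  obtains w where "grid_strategy N F w" "\<forall>f \<in> F. real m / real N * w' f \<le> w f"
proof -
  have w'_nonneg: "\<forall>f \<in> F. 0 \<le> w' f" and "sum w' F = 1"
    and supp: "card {f \<in> F. w' f \<noteq> 0} \<le> N0"
    using assms(4) by (auto simp: bounded_strategy_def is_strategy_def)
  define b where "b f = nat \<lceil>real m * w' f\<rceil>" for f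
  have "real (\<Sum>f\<in>F. b f) \<le> (\<Sum>f\<in>F. real m * w' f) + card {f \<in> F. real m * w' f \<noteq> 0}"
    unfolding b_def using assms(1) w'_nonneg by (intro sum_nat_ceiling_le) auto
  also have "\<dots> \<le> real m + card {f \<in> F. w' f \<noteq> 0}"
    using \<open>sum w' F = 1\<close> assms(1)
    by (simp add: sum_distrib_left[symmetric] card_mono subset_eq)
  also have "\<dots> \<le> real N" using supp assms(5) by linarith
  finally have "(\<Sum>f\<in>F. b f) \<le> N" by linarith
  then obtain \<beta> where b_le: "\<forall>f. b f \<le> \<beta> f" and sum_\<beta>: "(\<Sum>f\<in>F. \<beta> f) = N"
    using exists_dominating_sum_eq[OF assms(1)] assms(2) by blast
  show ?thesis
  proof
    show "grid_strategy N F (\<lambda>f. if f \<in> F then real (\<beta> f) / real N else 0)"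
      using grid_strategy_of_numerators[OF assms(1,3) sum_\<beta>] .
    have "real m * w' f \<le> real (\<beta> f)" for f
      using b_le[rule_format, of f] unfolding b_def by linarith
    then show "\<forall>f \<in> F. real m / real N * w' f \<le> (if f \<in> F then real (\<beta> f) / real N else 0)"
      using \<open>0 < N\<close> by (simp add: divide_right_mono)
  qed
qed

lemma robust_Loss_grid_opt_ge_bounded:
  assumes "finite F" "F \<noteq> {}" "finite U" "U \<noteq> {}" "0 < N0"
    and Loss_nonneg: "\<forall>f \<in> F. \<forall>P \<in> U. 0 \<le> Loss E C f P"
    and "bounded_strategy N0 F w'"
    and grid_opt: "\<forall>w. grid_strategy (N0 ^ 2 + N0) F w \<longrightarrow>
                     robust_Loss E C F U w \<le> robust_Loss E C F U w_opt"
  shows "real N0 / (real N0 + 1) * robust_Loss E C F U w' \<le> robust_Loss E C F U w_opt"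
proof -
  let ?N = "N0 ^ 2 + N0"
  obtain w where "grid_strategy ?N F w"
    and dom: "\<forall>f \<in> F. real (N0 ^ 2) / real ?N * w' f \<le> w f"
    using grid_strategy_dominating[OF assms(1,2) _ assms(7), where N = "N0 ^ 2 + N0" and m = "N0 ^ 2"]
      \<open>0 < N0\<close> by auto
  have "real ?N = real N0 * (real N0 + 1)" by (simp add: power2_eq_square algebra_simps)
  then have "real N0 / (real N0 + 1) * robust_Loss E C F U w'
      = real (N0 ^ 2) / real ?N * robust_Loss E C F U w'"
    using \<open>0 < N0\<close> by (simp add: power2_eq_square)
  also have "\<dots> \<le> robust_Loss E C F U w"
    using dom Loss_nonneg by (intro robust_Loss_scaled_le[OF assms(3,4)]) auto
  also have "\<dots> \<le> robust_Loss E C F U w_opt" using grid_opt \<open>grid_strategy ?N F w\<close> by blast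
  finally show ?thesis .
qed

lemma robust_Loss_grid_le_ILP_ratio:
  assumes "finite U" "U \<noteq> {}" "grid_strategy N F w" "0 < N"
    and integral: "\<forall>f \<in> F. \<forall>P \<in> U. Loss E C f P \<in> \<nat>"
  obtains \<kappa> :: nat
  where "real \<kappa> = real N * robust_Loss E C F U w" "robust_Loss E C F U w \<le> ILP_ratio E C F U \<kappa>"
proof -
  obtain \<beta> where \<beta>: "\<forall>f \<in> F. w f = real (\<beta> f) / real N" and sum_\<beta>: "(\<Sum>f\<in>F. \<beta> f) = N"
    using grid_strategy_numerators[OF assms(3,4)] .
  have scaled: "real N * strat_Loss E C F w P = (\<Sum>f\<in>F. real (\<beta> f) * Loss E C f P)" for P
    unfolding strat_Loss_def sum_distrib_left using \<beta> \<open>0 < N\<close> by (intro sum.cong) auto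
  obtain L :: "_ \<Rightarrow> _ \<Rightarrow> nat"
    where L: "\<forall>f \<in> F. \<forall>P \<in> U. Loss E C f P = real (L f P)"
  proof -
    have "\<forall>f \<in> F. \<forall>P \<in> U. \<exists>n. Loss E C f P = real n"
      using integral by (auto simp: Nats_def)
    then show ?thesis using that by metis
  qed
  obtain P0 where "P0 \<in> U" and attained: "robust_Loss E C F U w = strat_Loss E C F w P0"
    using robust_Loss_attained[OF assms(1,2)] .
  define \<kappa> where "\<kappa> = (\<Sum>f\<in>F. \<beta> f * L f P0)"
  have \<kappa>: "real \<kappa> = real N * robust_Loss E C F U w"
    unfolding \<kappa>_def attained scaled using L \<open>P0 \<in> U\<close> by simp
  have feas: "ILP_feasible E C F U \<kappa> \<beta>"
    unfolding ILP_feasible_def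
    using robust_Loss_le[OF assms(1)] \<open>0 < N\<close> by (simp add: \<kappa> flip: scaled)
  have "robust_Loss E C F U w \<le> ILP_ratio E C F U \<kappa>"
  proof (cases "\<kappa> = 0")
    case True
    then show ?thesis using \<kappa> \<open>0 < N\<close> ILP_ratio_nonneg by simp
  next
    case False
    then show ?thesis
      using ILP_ratio_ge[OF feas _ assms(2)] sum_\<beta> False \<kappa> \<open>0 < N\<close> by (simp add: field_simps)
  qed
  with \<kappa> that show ?thesis by blast
qed

theorem lemma5:
  fixes V :: "'v set" and E :: "'v edge set" and C :: "'v flow" and s t :: 'v
    and \<gamma> :: real and U :: "'v pathset set" and N0 N :: nat and M :: real
    and w_star w_N :: "'v flow \<Rightarrow> real" and \<kappa>_star :: nat
  defines "F \<equiv> single_path_flows E s t \<gamma>"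
  assumes finV: "finite V" and EV: "E \<subseteq> V \<times> V" and dag: "acyclic E"
    and sV: "s \<in> V" and tV: "t \<in> V" and st_conn: "st_paths E s t \<noteq> {}"
    and Cnonneg: "\<forall>e \<in> E. 0 \<le> C e"
    and gpos: "0 < \<gamma>" and gle: "\<forall>e \<in> E. \<gamma> \<le> C e"
    and finU: "finite U" and Une: "U \<noteq> {}"
    and Uvalid: "\<forall>P \<in> U. valid_pathset E C P"
    and N0pos: "0 < N0" and Ndef: "N = N0 ^ 2 + N0"
    and integral: "\<forall>f \<in> F. \<forall>P \<in> U. Loss E C f P \<in> \<nat>"
    and Mdef: "M = real N * Max ((\<lambda>(f, P). Loss E C f P) ` (F \<times> U))"
    and kappa_range: "1 \<le> \<kappa>_star" "real \<kappa>_star \<le> M"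
    and kappa_opt: "\<forall>\<kappa>::nat. 1 \<le> \<kappa> \<and> real \<kappa> \<le> M \<longrightarrow>
                       ILP_ratio E C F U \<kappa> \<le> ILP_ratio E C F U \<kappa>_star"
    and wstar: "bounded_strategy N0 F w_star"
    and wstar_opt: "\<forall>w. bounded_strategy N0 F w \<longrightarrow>
                       robust_Loss E C F U w \<le> robust_Loss E C F U w_star"
    and wN: "grid_strategy N F w_N"
    and wN_opt: "\<forall>w. grid_strategy N F w \<longrightarrow>
                       robust_Loss E C F U w \<le> robust_Loss E C F U w_N"
  shows "ILP_ratio E C F U \<kappa>_star \<ge> robust_Loss E C F U w_N \<and>
         robust_Loss E C F U w_N \<ge> real N0 / (real N0 + 1) * robust_Loss E C F U w_star"
proof
  have "finite (Field E)" using finV EV by (metis Field_square finite_subset mono_Field)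
  then have finF: "finite F" unfolding F_def single_path_flows_def by (simp add: finite_st_paths)
  have "F \<noteq> {}" unfolding F_def single_path_flows_def using st_conn by blast
  have "0 < N" using N0pos Ndef by simp
  obtain \<kappa> where \<kappa>: "real \<kappa> = real N * robust_Loss E C F U w_N"
    and le_ratio: "robust_Loss E C F U w_N \<le> ILP_ratio E C F U \<kappa>"
    using robust_Loss_grid_le_ILP_ratio[OF finU Une wN \<open>0 < N\<close> integral] .
  show "ILP_ratio E C F U \<kappa>_star \<ge> robust_Loss E C F U w_N"
  proof (cases "\<kappa> = 0")
    case True
    then show ?thesis using \<kappa> \<open>0 < N\<close> ILP_ratio_nonneg[of E C F U \<kappa>_star] by simp
  next
    case False
    have "real \<kappa> \<le> M" unfolding \<kappa> Mdef using \<open>0 < N\<close> wN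
      by (simp add: robust_Loss_le_Max_Loss[OF finF finU Une] grid_strategy_def)
    then have "ILP_ratio E C F U \<kappa> \<le> ILP_ratio E C F U \<kappa>_star" using kappa_opt False by simp
    then show ?thesis using le_ratio by linarith
  qed
  have "\<forall>f \<in> F. \<forall>P \<in> U. 0 \<le> Loss E C f P"
    using integral by (metis Nats_cases of_nat_0_le_iff)
  then show "robust_Loss E C F U w_N \<ge> real N0 / (real N0 + 1) * robust_Loss E C F U w_star"
    using robust_Loss_grid_opt_ge_bounded[OF finF \<open>F \<noteq> {}\<close> finU Une N0pos _ wstar] wN_opt Ndef
    by blast
qed

end
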